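(* Let $n\ge1$, $s\in(0,1)$, $\varepsilon>0$ and $u\in C^{s+\varepsilon}_{loc}(\mathbb{R}^n)\cap L^2_s(\mathbb{R}^n)$. Then there is a constant $C>0$ depending only on $n$ and $s$ such that for every $R>0$, $$J^s_{ACF}(u,R)\le\frac{C}{R^{2s}}\int_{\mathbb{R}^n}\frac{G_u(x)}{|x|^{n-2s}}\,dx.$$
   Context: $B_r$ is the open ball of radius $r$ centered at $0$. $C_{n,s}:=\left(\int_{\mathbb{R}^n}\frac{1-\cos(\zeta_1)}{|\zeta|^{n+2s}}d\zeta\right)^{-1}$. $L^2_s(\mathbb{R}^n):=\{u\in L^1_{loc}:\int\frac{|u(x)|^2}{1+|x|^{n+2s}}dx<\infty\}$. For $\gamma>0$ not an integer, $C^{\gamma}_{loc}$ denotes $C^{k,\gamma-k}_{loc}$ with $k=\lfloor\gamma\rfloor$. $G_u(y):=C_{n,s}\int_{\mathbb{R}^n}\frac{(u(y)-u(\eta))^2}{|y-\eta|^{n+2s}}d\eta$. $a_{n,s}:=\Gamma(n/2)\pi^{-n/2-1}\sin(\pi s)$, $K^s_r(0,y):=a_{n,s}\left(\frac{r^2}{|y|^2-r^2}\right)^s\frac{1}{|y|^n}$ for $|y|>r$, and $J^s_{ACF}(u,R):=\frac{1}{R^{1+s}}\int_0^R r^s\int_{\mathbb{R}^n\setminus B_r}K^s_r(0,y)G_u(y)\,dy\,dr$. *)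

theory Defs
  imports "HOL-Analysis.Analysis"
begin

text \<open>Ambient space: R^n is an arbitrary euclidean_space 'a, with n = DIM('a).
  The first coordinate zeta_1 is taken along a fixed basis vector.\<close>

definition first_basis :: "'a::euclidean_space" where
  "first_basis = (SOME b. b \<in> Basis)"

definition C_ns :: "real \<Rightarrow> 'a::euclidean_space itself \<Rightarrow> real" where
  "C_ns s TYPE('a) = 1 / enn2real (\<integral>\<^sup>+ \<zeta>. ennreal ((1 - cos (\<zeta> \<bullet> (first_basis::'a)))
        / norm \<zeta> powr (real DIM('a) + 2 * s)) \<partial>lborel)"

definition L2_s :: "real \<Rightarrow> ('a::euclidean_space \<Rightarrow> real) set" where
  "L2_s s = {u. u \<in> borel_measurable lborel
      \<and> (\<forall>K. compact K \<longrightarrow> set_integrable lborel K u)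
      \<and> (\<integral>\<^sup>+ x. ennreal ((u x)\<^sup>2 / (1 + norm x powr (real DIM('a) + 2 * s))) \<partial>lborel) < \<infinity>}"

text \<open>C^{k,alpha}_loc via continuous partial derivatives: D bs is the iterated partial
  derivative along the basis directions in the list bs (innermost last).\<close>
definition Ckalpha_loc :: "nat \<Rightarrow> real \<Rightarrow> ('a::euclidean_space \<Rightarrow> real) set" where
  "Ckalpha_loc k \<alpha> = {u. \<exists>D :: 'a list \<Rightarrow> 'a \<Rightarrow> real.
      D [] = u
    \<and> (\<forall>bs. set bs \<subseteq> Basis \<and> length bs \<le> k \<longrightarrow> continuous_on UNIV (D bs))
    \<and> (\<forall>bs b x. set bs \<subseteq> Basis \<and> length bs < k \<and> b \<in> Basis \<longrightarrow>
          ((\<lambda>t. D bs (x + t *\<^sub>R b)) has_real_derivative D (b # bs) x) (at 0))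
    \<and> (\<forall>bs K. set bs \<subseteq> Basis \<and> length bs = k \<and> compact K \<longrightarrow>
          (\<exists>M. \<forall>x\<in>K. \<forall>y\<in>K. \<bar>D bs x - D bs y\<bar> \<le> M * dist x y powr \<alpha>))}"

text \<open>C^gamma_loc = C^{k, gamma-k}_loc with k = floor gamma for non-integer gamma.
  For integer gamma we use C^{gamma-1,1} (ceiling form), agreeing with the above otherwise.\<close>
definition Cgamma_loc :: "real \<Rightarrow> ('a::euclidean_space \<Rightarrow> real) set" where
  "Cgamma_loc \<gamma> = Ckalpha_loc (nat (\<lceil>\<gamma>\<rceil> - 1)) (\<gamma> - real_of_int (\<lceil>\<gamma>\<rceil> - 1))"

definition G_u :: "real \<Rightarrow> ('a::euclidean_space \<Rightarrow> real) \<Rightarrow> 'a \<Rightarrow> ennreal" where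
  "G_u s u y = ennreal (C_ns s TYPE('a)) *
     (\<integral>\<^sup>+ \<eta>. ennreal ((u y - u \<eta>)\<^sup>2 / norm (y - \<eta>) powr (real DIM('a) + 2 * s)) \<partial>lborel)"

definition a_ns :: "real \<Rightarrow> 'a::euclidean_space itself \<Rightarrow> real" where
  "a_ns s TYPE('a) = Gamma (real DIM('a) / 2) * pi powr (- real DIM('a) / 2 - 1) * sin (pi * s)"

definition K_s :: "real \<Rightarrow> real \<Rightarrow> 'a::euclidean_space \<Rightarrow> real" where
  "K_s s r y = a_ns s TYPE('a) * (r\<^sup>2 / ((norm y)\<^sup>2 - r\<^sup>2)) powr s / norm y ^ DIM('a)"

definition J_ACF :: "real \<Rightarrow> ('a::euclidean_space \<Rightarrow> real) \<Rightarrow> real \<Rightarrow> ennreal" where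
  "J_ACF s u R = ennreal (1 / R powr (1 + s)) *
     (\<integral>\<^sup>+ r \<in> {0<..<R}. ennreal (r powr s) *
        (\<integral>\<^sup>+ y \<in> {y. norm y > r}. ennreal (K_s s r y) * G_u s u y \<partial>lborel) \<partial>lborel)"

end

theory Submission
  imports Defs
begin

text \<open>
  Exchanging the order of integration (Tonelli) writes J(u,R) as R^-(1+s) times the integral
  of w(y) G_u(y), where w(y) = ACF_weight s R y is the integral of r^s K_r(0,y) over
  0 < r < min(R,|y|).  For r < rho = |y| the kernel factor r^s (r^2/(rho^2 - r^2))^s is at most
  rho^(2s) (rho - r)^-s, and by subadditivity of t^(1-s) the integral of (rho - r)^-s over
  [0,m] is at most m^(1-s)/(1-s).  Hence w(y) <= a_{n,s}/(1-s) R^(1-s) |y|^(2s-n), which gives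
  the estimate with C = a_{n,s}/(1-s).\<close>

lemma powr_add_le_add_powr:
  fixes x y p :: real
  assumes "0 \<le> x" "0 \<le> y" "0 < p" "p \<le> 1"
  shows "(x + y) powr p \<le> x powr p + y powr p"
proof (cases "x + y = 0")
  case True
  then show ?thesis using assms by simp
next
  case False
  then have xy: "0 < x + y" using assms by linarith
  have le_powr: "t \<le> t powr p" if "0 \<le> t" "t \<le> 1" for t :: real
    using powr_mono'[of p 1 t] that assms by (cases "t = 0") auto
  have "1 = x / (x + y) + y / (x + y)"
    using xy by (simp add: add_divide_distrib[symmetric])
  also have "\<dots> \<le> (x / (x + y)) powr p + (y / (x + y)) powr p"
    using assms xy by (intro add_mono le_powr) auto
  also have "\<dots> = (x powr p + y powr p) / (x + y) powr p"
    using assms by (simp add: powr_divide add_divide_distrib)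
  finally show ?thesis using xy by (simp add: field_simps)
qed

lemma nn_integral_diff_powr_neg_le:
  fixes s \<rho> m :: real
  assumes "0 < s" "s < 1" "0 \<le> m" "m \<le> \<rho>"
  shows "(\<integral>\<^sup>+ r \<in> {0..m}. ennreal ((\<rho> - r) powr (- s)) \<partial>lborel) \<le> ennreal (m powr (1 - s) / (1 - s))"
proof -
  define F where "F r = - ((\<rho> - r) powr (1 - s) / (1 - s))" for r
  have "((\<lambda>r. (\<rho> - r) powr (- s)) has_integral (F m - F 0)) {0..m}"
  proof (rule fundamental_theorem_of_calculus_interior_strong[where S = "{}"])
    show "continuous_on {0..m} F"
      unfolding F_def by (intro continuous_intros continuous_on_powr') (use assms in auto)
    fix r assume "r \<in> {0<..<m} - {}"
    then have "0 < \<rho> - r" using assms by auto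
    then have "((\<lambda>r. (\<rho> - r) powr (1 - s)) has_real_derivative
        (1 - s) * (\<rho> - r) powr (1 - s - 1) * (0 - 1)) (at r)"
      by (intro DERIV_powr derivative_intros)
    then have "(F has_real_derivative - ((1 - s) * (\<rho> - r) powr (1 - s - 1) * (0 - 1) / (1 - s))) (at r)"
      unfolding F_def by (intro DERIV_minus DERIV_cdivide)
    then show "(F has_vector_derivative (\<rho> - r) powr (- s)) (at r)"
      using assms by (simp add: has_real_derivative_iff_has_vector_derivative)
  qed (use assms in auto)
  then have "(\<integral>\<^sup>+ r \<in> {0..m}. ennreal ((\<rho> - r) powr (- s)) \<partial>lborel) = ennreal (F m - F 0)"
    by (intro nn_integral_has_integral_lebesgue') auto
  also have "F m - F 0 = (\<rho> powr (1 - s) - (\<rho> - m) powr (1 - s)) / (1 - s)"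
    unfolding F_def by (simp add: diff_divide_distrib)
  also have "\<dots> \<le> m powr (1 - s) / (1 - s)"
    using powr_add_le_add_powr[of "\<rho> - m" m "1 - s"] assms by (intro divide_right_mono) auto
  finally show ?thesis by (simp add: ennreal_leI)
qed

lemma Poisson_kernel_factor_le:
  fixes s r \<rho> :: real
  assumes "0 \<le> s" "0 < r" "r < \<rho>"
  shows "r powr s * (r\<^sup>2 / (\<rho>\<^sup>2 - r\<^sup>2)) powr s \<le> \<rho> powr (2 * s) * (\<rho> - r) powr (- s)"
proof -
  have diff_sq: "\<rho>\<^sup>2 - r\<^sup>2 = (\<rho> - r) * (\<rho> + r)"
    by (simp add: power2_eq_square algebra_simps)
  have "r ^ 3 \<le> \<rho>\<^sup>2 * (\<rho> + r)"
  proof -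
    have "r ^ 3 \<le> \<rho> ^ 3" using assms by (intro power_mono) auto
    also have "\<dots> \<le> \<rho>\<^sup>2 * (\<rho> + r)" using assms by (simp add: power3_eq_cube power2_eq_square)
    finally show ?thesis .
  qed
  have "r * (r\<^sup>2 / (\<rho>\<^sup>2 - r\<^sup>2)) = r ^ 3 / ((\<rho> - r) * (\<rho> + r))"
    unfolding diff_sq by (simp add: power3_eq_cube power2_eq_square)
  also have "\<dots> \<le> \<rho>\<^sup>2 * (\<rho> + r) / ((\<rho> - r) * (\<rho> + r))"
    using \<open>r ^ 3 \<le> \<rho>\<^sup>2 * (\<rho> + r)\<close> assms by (intro divide_right_mono) auto
  also have "\<dots> = \<rho>\<^sup>2 / (\<rho> - r)"
    using assms by simp
  finally have "r * (r\<^sup>2 / (\<rho>\<^sup>2 - r\<^sup>2)) \<le> \<rho>\<^sup>2 / (\<rho> - r)" .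
  then have "(r * (r\<^sup>2 / (\<rho>\<^sup>2 - r\<^sup>2))) powr s \<le> (\<rho>\<^sup>2 / (\<rho> - r)) powr s"
    using assms unfolding diff_sq by (intro powr_mono2) auto
  moreover have "r powr s * (r\<^sup>2 / (\<rho>\<^sup>2 - r\<^sup>2)) powr s = (r * (r\<^sup>2 / (\<rho>\<^sup>2 - r\<^sup>2))) powr s"
    using assms by (subst powr_mult) (auto simp: diff_sq)
  moreover have "(\<rho>\<^sup>2 / (\<rho> - r)) powr s = \<rho> powr (2 * s) * (\<rho> - r) powr (- s)"
    using assms by (simp add: powr_divide powr_minus_divide powr_powr[symmetric])
  ultimately show ?thesis by simp
qed

lemma a_ns_pos:
  assumes "0 < s" "s < 1"
  shows "0 < a_ns s TYPE('a::euclidean_space)"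
  unfolding a_ns_def using assms by (auto intro!: mult_pos_pos sin_gt_zero)

lemma powr_mult_K_s_le:
  fixes y :: "'a::euclidean_space"
  assumes "0 < s" "s < 1" "0 < r" "r < norm y"
  shows "r powr s * K_s s r y
    \<le> a_ns s TYPE('a) * norm y powr (2 * s) / norm y ^ DIM('a) * (norm y - r) powr (- s)"
proof -
  have "r powr s * K_s s r y
      = a_ns s TYPE('a) / norm y ^ DIM('a) * (r powr s * (r\<^sup>2 / ((norm y)\<^sup>2 - r\<^sup>2)) powr s)"
    by (simp add: K_s_def)
  also have "\<dots> \<le> a_ns s TYPE('a) / norm y ^ DIM('a) * (norm y powr (2 * s) * (norm y - r) powr (- s))"
    using a_ns_pos[OF assms(1,2), where 'a = 'a] assms
    by (intro mult_left_mono Poisson_kernel_factor_le) auto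
  finally show ?thesis by simp
qed

definition ACF_weight :: "real \<Rightarrow> real \<Rightarrow> 'a::euclidean_space \<Rightarrow> ennreal" where
  "ACF_weight s R y = (\<integral>\<^sup>+ r \<in> {0<..<min R (norm y)}. ennreal (r powr s) * ennreal (K_s s r y) \<partial>lborel)"

lemma G_u_measurable [measurable]:
  fixes u :: "'a::euclidean_space \<Rightarrow> real"
  assumes [measurable]: "u \<in> borel_measurable borel"
  shows "G_u s u \<in> borel_measurable borel"
  unfolding G_u_def by measurable

lemma J_ACF_eq_nn_integral_ACF_weight:
  fixes u :: "'a::euclidean_space \<Rightarrow> real"
  assumes [measurable]: "u \<in> borel_measurable borel"
  shows "J_ACF s u R = ennreal (1 / R powr (1 + s)) * (\<integral>\<^sup>+ y. ACF_weight s R y * G_u s u y \<partial>lborel)"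
proof -
  define f where "f r y = ennreal (r powr s) * ennreal (K_s s r y)
    * indicator {0<..<min R (norm y)} r * G_u s u y" for r y
  have f_measurable: "case_prod f \<in> borel_measurable (lborel \<Otimes>\<^sub>M lborel)"
    unfolding f_def K_s_def indicator_def greaterThanLessThan_iff by measurable
  have inner_measurable:
    "(\<lambda>y. ennreal (K_s s r y) * G_u s u y * indicator {y. r < norm y} y) \<in> borel_measurable lborel" for r
    unfolding K_s_def by measurable
  have weight_measurable:
    "(\<lambda>r. ennreal (r powr s) * ennreal (K_s s r y) * indicator {0<..<min R (norm y)} r)
      \<in> borel_measurable lborel" for y :: 'a
    unfolding K_s_def by measurable
  have "(\<integral>\<^sup>+ r \<in> {0<..<R}. ennreal (r powr s)
          * (\<integral>\<^sup>+ y \<in> {y. r < norm y}. ennreal (K_s s r y) * G_u s u y \<partial>lborel) \<partial>lborel)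
      = (\<integral>\<^sup>+ r. \<integral>\<^sup>+ y. f r y \<partial>lborel \<partial>lborel)"
  proof (intro nn_integral_cong)
    fix r :: real
    have "(\<integral>\<^sup>+ y. f r y \<partial>lborel) = (\<integral>\<^sup>+ y. ennreal (r powr s)
        * (ennreal (K_s s r y) * G_u s u y * indicator {y. r < norm y} y) * indicator {0<..<R} r \<partial>lborel)"
      by (intro nn_integral_cong) (auto simp: f_def mult_ac split: split_indicator)
    then show "ennreal (r powr s) * (\<integral>\<^sup>+ y \<in> {y. r < norm y}. ennreal (K_s s r y) * G_u s u y \<partial>lborel)
        * indicator {0<..<R} r = (\<integral>\<^sup>+ y. f r y \<partial>lborel)"
      using inner_measurable by (simp add: nn_integral_multc nn_integral_cmult)
  qed
  also have "\<dots> = (\<integral>\<^sup>+ y. \<integral>\<^sup>+ r. f r y \<partial>lborel \<partial>lborel)"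
    by (rule lborel_pair.Fubini'[OF f_measurable, symmetric])
  also have "\<dots> = (\<integral>\<^sup>+ y. ACF_weight s R y * G_u s u y \<partial>lborel)"
    unfolding ACF_weight_def f_def
    by (intro nn_integral_cong) (rule nn_integral_multc[OF weight_measurable])
  finally show ?thesis by (simp add: J_ACF_def)
qed

lemma ACF_weight_le:
  fixes y :: "'a::euclidean_space"
  assumes "0 < s" "s < 1" "0 < R"
  shows "ACF_weight s R y
    \<le> ennreal (a_ns s TYPE('a) / (1 - s) * R powr (1 - s) / norm y powr (real DIM('a) - 2 * s))"
proof (cases "y = 0")
  case True
  then show ?thesis by (simp add: ACF_weight_def)
next
  case False
  define \<rho> where "\<rho> = norm y"
  define m where "m = min R \<rho>"
  define c where "c = a_ns s TYPE('a) * \<rho> powr (2 * s) / \<rho> ^ DIM('a)"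
  have "0 < \<rho>" using False by (simp add: \<rho>_def)
  have "0 \<le> c" using a_ns_pos[OF assms(1,2), where 'a = 'a] \<open>0 < \<rho>\<close> by (simp add: c_def)
  have kernel_le: "ennreal (r powr s) * ennreal (K_s s r y) \<le> ennreal c * ennreal ((\<rho> - r) powr (- s))"
    if "r \<in> {0<..<m}" for r
    using powr_mult_K_s_le[OF assms(1,2), of r y] that \<open>0 \<le> c\<close>
    by (simp add: m_def \<rho>_def c_def ennreal_mult'[symmetric] ennreal_leI)
  have "ACF_weight s R y \<le> (\<integral>\<^sup>+ r \<in> {0..m}. ennreal c * ennreal ((\<rho> - r) powr (- s)) \<partial>lborel)"
    unfolding ACF_weight_def
    using kernel_le by (intro nn_integral_mono) (auto simp: m_def \<rho>_def split: split_indicator)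
  also have "\<dots> = ennreal c * (\<integral>\<^sup>+ r \<in> {0..m}. ennreal ((\<rho> - r) powr (- s)) \<partial>lborel)"
    by (subst nn_integral_cmult[symmetric]) (auto simp: mult.assoc)
  also have "\<dots> \<le> ennreal c * ennreal (m powr (1 - s) / (1 - s))"
    using assms \<open>0 < \<rho>\<close> by (intro mult_left_mono nn_integral_diff_powr_neg_le) (auto simp: m_def)
  also have "\<dots> \<le> ennreal c * ennreal (R powr (1 - s) / (1 - s))"
    using assms \<open>0 < \<rho>\<close>
    by (intro mult_left_mono ennreal_leI divide_right_mono powr_mono2) (auto simp: m_def)
  also have "\<dots> = ennreal (c * (R powr (1 - s) / (1 - s)))"
    using \<open>0 \<le> c\<close> assms by (subst ennreal_mult) auto
  also have "c * (R powr (1 - s) / (1 - s))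
      = a_ns s TYPE('a) / (1 - s) * R powr (1 - s) / \<rho> powr (real DIM('a) - 2 * s)"
    using \<open>0 < \<rho>\<close> assms by (simp add: c_def powr_diff powr_realpow field_simps)
  finally show ?thesis by (simp add: \<rho>_def)
qed

lemma J_ACF_le_nn_integral_G_u:
  fixes u :: "'a::euclidean_space \<Rightarrow> real"
  assumes "0 < s" "s < 1" "0 < R" and [measurable]: "u \<in> borel_measurable borel"
  shows "J_ACF s u R \<le> ennreal (a_ns s TYPE('a) / (1 - s) / R powr (2 * s))
    * (\<integral>\<^sup>+ x. G_u s u x * ennreal (1 / norm x powr (real DIM('a) - 2 * s)) \<partial>lborel)"
proof -
  define C where "C = a_ns s TYPE('a) / (1 - s)"
  define w where "w x = ennreal (1 / norm x powr (real DIM('a) - 2 * s))" for x :: 'a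
  have "0 < C" using a_ns_pos[OF assms(1,2), where 'a = 'a] assms by (simp add: C_def)
  have weight_le: "ACF_weight s R x * G_u s u x \<le> ennreal (C * R powr (1 - s)) * (G_u s u x * w x)" for x
  proof -
    have "ACF_weight s R x \<le> ennreal (C * R powr (1 - s)) * w x"
      using ACF_weight_le[OF assms(1-3), of x] \<open>0 < C\<close>
      by (simp add: C_def w_def ennreal_mult'[symmetric] divide_inverse)
    then have "ACF_weight s R x * G_u s u x \<le> ennreal (C * R powr (1 - s)) * w x * G_u s u x"
      by (rule mult_right_mono) simp
    then show ?thesis by (simp add: mult_ac)
  qed
  have "J_ACF s u R = ennreal (1 / R powr (1 + s)) * (\<integral>\<^sup>+ x. ACF_weight s R x * G_u s u x \<partial>lborel)"
    by (rule J_ACF_eq_nn_integral_ACF_weight) measurable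
  also have "\<dots> \<le> ennreal (1 / R powr (1 + s))
      * (\<integral>\<^sup>+ x. ennreal (C * R powr (1 - s)) * (G_u s u x * w x) \<partial>lborel)"
    using weight_le by (intro mult_left_mono nn_integral_mono) auto
  also have "\<dots> = ennreal (1 / R powr (1 + s)) * ennreal (C * R powr (1 - s))
      * (\<integral>\<^sup>+ x. G_u s u x * w x \<partial>lborel)"
    by (subst nn_integral_cmult) (auto simp: w_def mult.assoc)
  also have "ennreal (1 / R powr (1 + s)) * ennreal (C * R powr (1 - s)) = ennreal (C / R powr (2 * s))"
  proof -
    have "R powr (1 + s) = R powr (1 - s) * R powr (2 * s)"
      by (simp add: powr_add[symmetric] add.commute)
    then show ?thesis
      using \<open>0 < C\<close> \<open>0 < R\<close> by (simp add: ennreal_mult'[symmetric])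
  qed
  finally show ?thesis by (simp add: C_def w_def)
qed

theorem proposition3p3:
  fixes s :: real
  assumes "0 < s" and "s < 1"
  shows "\<exists>C>0. \<forall>(\<epsilon>::real) (u :: 'a::euclidean_space \<Rightarrow> real) R.
           0 < \<epsilon> \<longrightarrow> u \<in> Cgamma_loc (s + \<epsilon>) \<longrightarrow> u \<in> L2_s s \<longrightarrow> 0 < R \<longrightarrow>
           J_ACF s u R \<le> ennreal (C / R powr (2 * s)) *
             (\<integral>\<^sup>+ x. G_u s u x * ennreal (1 / norm x powr (real DIM('a) - 2 * s)) \<partial>lborel)"
proof -
  have "0 < a_ns s TYPE('a) / (1 - s)"
    using a_ns_pos[OF assms, where 'a = 'a] assms by simp
  moreover have "J_ACF s u R \<le> ennreal (a_ns s TYPE('a) / (1 - s) / R powr (2 * s))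
      * (\<integral>\<^sup>+ x. G_u s u x * ennreal (1 / norm x powr (real DIM('a) - 2 * s)) \<partial>lborel)"
    if "u \<in> L2_s s" "0 < R" for u :: "'a \<Rightarrow> real" and R
    using that assms by (intro J_ACF_le_nn_integral_G_u) (auto simp: L2_s_def)
  ultimately show ?thesis by blast
qed

end
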